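(* Consider the lattice Boltzmann scheme described in the context, under acoustic scaling ($\lambda>0$ fixed as $\Delta x\to 0$, with $M$, $S$, $\epsilon$ independent of $\Delta x$), and a local initialisation $w\in\mathbb{R}^{q}$. Then for every $n\in\mathbb{N}^*$ the modified equation of the $n$-th starting scheme is, for $x\in\mathbb{R}^{d}$, \begin{align*} \phi(0,x) &+ n\frac{\Delta x}{\lambda}\partial_t\phi(0,x) + O(\Delta x^2)\\ &= w_1\phi(0,x) - n\Delta x\Big(\mathcal{G}_{11}w_1 + \sum_{r=2}^{q}\mathcal{G}_{1r}w_r + \frac{1}{n}\sum_{r=2}^{q}\mathcal{G}_{1r}(\epsilon_r w_1 - w_r)\sum_{\ell=0}^{n-1}\pi_{n-\ell}(s_r)\Big)\phi(0,x) + O(\Delta x^2), \end{align*} where $\pi_\ell(X)=1-(1-X)^\ell$ for $\ell\in\mathbb{N}$. In particular, for every smooth $\phi$, $((E^n w)_1\phi(0,\cdot))(x)$ admits the expansion given by the right-hand side.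
   Context: Fix $d\ge 1$, $q\ge 1$, discrete velocities $c_1,\dots,c_q\in\mathbb{Z}^d$, an invertible moment matrix $M\in GL_q(\mathbb{R})$, a relaxation matrix $S=\mathrm{diag}(s_1,\dots,s_q)$ with $s_i\in(0,2]$ for $i\in\{2,\dots,q\}$ and $s_1\in\mathbb{R}$, and equilibrium coefficients $\epsilon\in\mathbb{R}^q$ with $\epsilon_1=1$. The collision matrix is $K=I-S(I-\epsilon e_1^T)$, with $e_1$ the first canonical vector. Let $\Delta x>0$ be the space step, $\lambda>0$ the lattice velocity and $\Delta t=\Delta x/\lambda$. For $\ell=1,\dots,d$ the shift operator $x_\ell$ acts on functions of $x\in\mathbb{R}^d$ by $(x_\ell\phi)(x)=\phi(x-\Delta x\, e_\ell)$, and for $c\in\mathbb{Z}^d$, $x^{c}=x_1^{c_1}\cdots x_d^{c_d}$. The transport matrix is $T=M\,\mathrm{diag}(x^{c_1},\dots,x^{c_q})M^{-1}$ and the evolution matrix is $E=TK$ (entries are Laurent polynomials in the shifts). The time shift is $(z\phi)(t)=\phi(t+\Delta t)$. The lattice Boltzmann scheme updates the vector of moments by $m(t+\Delta t,\cdot)=E\,m(t,\cdot)$; $m_1$ is the conserved moment. The matrix of first-order differential operators is $\mathcal{G}=M\,\mathrm{diag}(c_1\cdot\nabla_x,\dots,c_q\cdot\nabla_x)M^{-1}$ with entries $\mathcal{G}_{ij}$. Given the lattice discretisation $m_1^\circ$ of an initial datum, the initialisation is $m(0,x)=w\,m_1^\circ(x)$; it is local if $w\in\mathbb{R}^q$. The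 $n$-th starting scheme ($n\in\mathbb{N}^*$) is $m_1(n\Delta t,x)=(E^n w)_1 m_1^\circ(x)$. Its modified equation is obtained by replacing the discrete unknowns by a smooth function $\phi(t,x)$, so that the scheme reads $(z^n\phi)(0,x)=((E^nw)_1\phi(0,\cdot))(x)$, and Taylor-expanding both sides in powers of $\Delta x$ as $\Delta x\to 0$. *)

theory Defs
  imports "HOL-Analysis.Analysis" "HOL-Library.Landau_Symbols"
begin

fun Ck :: "nat \<Rightarrow> ('a::real_normed_vector \<Rightarrow> real) \<Rightarrow> bool" where
  "Ck 0 f = continuous_on UNIV f"
| "Ck (Suc k) f = (\<exists>f'. (\<forall>x. (f has_derivative f' x) (at x)) \<and> (\<forall>v. Ck k (\<lambda>x. f' x v)))"

definition smooth_fun :: "('a::real_normed_vector \<Rightarrow> real) \<Rightarrow> bool" where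
  "smooth_fun f \<longleftrightarrow> (\<forall>k. Ck k f)"

definition realv :: "int^'d \<Rightarrow> real^'d" where
  "realv c = (\<chi> a. real_of_int (c $ a))"

text \<open>Collision matrix K = I - S (I - eps e_1^T), indices 1..q.\<close>
definition Kmat :: "(nat \<Rightarrow> real) \<Rightarrow> (nat \<Rightarrow> real) \<Rightarrow> nat \<Rightarrow> nat \<Rightarrow> real" where
  "Kmat s eps i j = (if i = j then 1 else 0) - s i * ((if i = j then 1 else 0) - eps i * (if j = 1 then 1 else 0))"

text \<open>One application of the evolution matrix E = T K (T = M diag(x^{c_k}) M^{-1}) to a
vector of moment functions, for space step dx. The shift x^c acts by
(x^c f)(x) = f(x - dx c).\<close>
definition lbm_step ::
  "nat \<Rightarrow> (nat \<Rightarrow> int^'d) \<Rightarrow> (nat \<Rightarrow> nat \<Rightarrow> real) \<Rightarrow> (nat \<Rightarrow> nat \<Rightarrow> real)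
   \<Rightarrow> (nat \<Rightarrow> real) \<Rightarrow> (nat \<Rightarrow> real) \<Rightarrow> real
   \<Rightarrow> (nat \<Rightarrow> real^'d \<Rightarrow> real) \<Rightarrow> (nat \<Rightarrow> real^'d \<Rightarrow> real)" where
  "lbm_step q c M Minv s eps dx m =
     (\<lambda>i x. \<Sum>k=1..q. M i k *
        (\<Sum>j=1..q. Minv k j * (\<Sum>l=1..q. Kmat s eps j l * m l (x - dx *\<^sub>R realv (c k)))))"

definition starting_scheme ::
  "nat \<Rightarrow> (nat \<Rightarrow> int^'d) \<Rightarrow> (nat \<Rightarrow> nat \<Rightarrow> real) \<Rightarrow> (nat \<Rightarrow> nat \<Rightarrow> real)
   \<Rightarrow> (nat \<Rightarrow> real) \<Rightarrow> (nat \<Rightarrow> real) \<Rightarrow> (nat \<Rightarrow> real) \<Rightarrow> nat \<Rightarrow> real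
   \<Rightarrow> (real^'d \<Rightarrow> real) \<Rightarrow> real^'d \<Rightarrow> real" where
  "starting_scheme q c M Minv s eps w n dx phi x =
     ((lbm_step q c M Minv s eps dx ^^ n) (\<lambda>i y. w i * phi y)) 1 x"

definition Gop ::
  "nat \<Rightarrow> (nat \<Rightarrow> int^'d) \<Rightarrow> (nat \<Rightarrow> nat \<Rightarrow> real) \<Rightarrow> (nat \<Rightarrow> nat \<Rightarrow> real)
   \<Rightarrow> nat \<Rightarrow> nat \<Rightarrow> (real^'d \<Rightarrow> real) \<Rightarrow> real^'d \<Rightarrow> real" where
  "Gop q c M Minv i j f x = (\<Sum>k=1..q. M i k * Minv k j * frechet_derivative f (at x) (realv (c k)))"

definition pi_poly :: "nat \<Rightarrow> real \<Rightarrow> real" where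
  "pi_poly l X = 1 - (1 - X) ^ l"

end

theory Submission
  imports Defs
begin

text \<open>
  Acoustic scaling makes the shift \<open>x\<^sup>c\<close> act on a smooth function as \<open>1 - dx c\<cdot>\<nabla> + O(dx\<^sup>2)\<close>.
  So if, along every ray \<open>x - dx v\<close>, the moment vector is \<open>a \<phi> - dx g + O(dx\<^sup>2)\<close>, one step of
  \<open>E = T K\<close> produces the same form with \<open>(K a, K g + \<G> K a)\<close>: the \<open>dx\<^sup>0\<close> parts of \<open>M\<close> and \<open>M\<^sup>-\<^sup>1\<close>
  cancel, and the \<open>dx\<^sup>1\<close> parts assemble into \<open>\<G>\<close>. Since \<open>\<epsilon>\<^sub>1 = 1\<close>, the first row of \<open>K\<close> is \<open>e\<^sub>1\<^sup>T\<close>: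
  the conserved moment keeps the coefficient \<open>w\<^sub>1\<close> and accumulates \<open>\<Sum>\<^sub>b\<^sub>=\<^sub>1\<^sup>n (\<G> K\<^sup>b w)\<^sub>1\<close>,
  while each non-conserved coefficient relaxes geometrically,
  \<open>(K\<^sup>b w)\<^sub>r = w\<^sub>r + \<pi>\<^sub>b(s\<^sub>r) (\<epsilon>\<^sub>r w\<^sub>1 - w\<^sub>r)\<close>.
\<close>

lemma differentiable_imp_increment_bigo:
  fixes k :: "real \<Rightarrow> real"
  assumes "k differentiable (at 0)"
  shows "(\<lambda>t. k t - k 0) \<in> O[at 0](\<lambda>t. t)"
proof -
  obtain D where "(k has_real_derivative D) (at 0)"
    using assms real_differentiable_def by blast
  then have "((\<lambda>t. (k t - k 0) / t) \<longlongrightarrow> D) (at 0)"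
    by (simp add: DERIV_def)
  moreover have "\<forall>\<^sub>F t in at 0. (t::real) \<noteq> 0"
    by (simp add: eventually_at_filter)
  ultimately show ?thesis
    by (rule bigoI_tendsto)
qed

lemma first_order_taylor_bigo:
  fixes h k :: "real \<Rightarrow> real"
  assumes h': "\<And>t. (h has_real_derivative k t) (at t)" and k: "k differentiable (at 0)"
  shows "(\<lambda>t. h t - (h 0 + t * k 0)) \<in> O[at_right 0](\<lambda>t. t^2)"
proof -
  have "(\<lambda>t. k t - k 0) \<in> O[at_right 0](\<lambda>t. t)"
    using differentiable_imp_increment_bigo[OF k] by (rule landau_o.big.filter_mono[OF at_le, rotated]) simp
  then obtain C where C: "C > 0" and "\<forall>\<^sub>F t in at_right 0. norm (k t - k 0) \<le> C * norm t"
    by (rule landau_o.bigE)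
  then obtain b where b: "b > 0" and kb: "\<And>z. 0 < z \<Longrightarrow> z < b \<Longrightarrow> \<bar>k z - k 0\<bar> \<le> C * z"
    by (auto simp: eventually_at_right_field)
  have "\<bar>h t - (h 0 + t * k 0)\<bar> \<le> C * t^2" if t: "0 < t" "t < b" for t
  proof -
    obtain z where z: "0 < z" "z < t" "h t - h 0 = (t - 0) * k z"
      using MVT2[of 0 t h k] h' t by auto
    have "h t - (h 0 + t * k 0) = t * (k z - k 0)"
      using z by (simp add: algebra_simps)
    then have "\<bar>h t - (h 0 + t * k 0)\<bar> = t * \<bar>k z - k 0\<bar>"
      using t by (simp add: abs_mult)
    also have "\<dots> \<le> t * (C * t)"
      using kb[of z] z t C by (intro mult_left_mono) (auto intro: order_trans)
    finally show ?thesis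
      by (simp add: power2_eq_square mult_ac)
  qed
  then have "\<forall>\<^sub>F t in at_right 0. norm (h t - (h 0 + t * k 0)) \<le> C * norm (t^2)"
    using b by (auto simp: eventually_at_right_field)
  with C show ?thesis
    by (rule landau_o.bigI)
qed

lemma Ck_Suc_has_derivative:
  assumes "Ck (Suc k) F"
  shows "(F has_derivative frechet_derivative F (at y)) (at y)"
  using assms frechet_derivative_works by (auto simp: differentiable_def)

lemma Ck2_taylor_bigo:
  fixes F :: "'a::real_normed_vector \<Rightarrow> real"
  assumes "Ck 2 F"
  shows "(\<lambda>t. F (p + t *\<^sub>R v) - (F p + t * frechet_derivative F (at p) v)) \<in> O[at_right 0](\<lambda>t. t^2)"
proof -
  have "Ck (Suc (Suc 0)) F"
    using assms by (simp only: numeral_2_eq_2)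
  then obtain F' where F': "\<And>y. (F has_derivative F' y) (at y)" and F'v: "Ck (Suc 0) (\<lambda>y. F' y v)"
    unfolding Ck.simps(2)[of "Suc 0"] by blast
  have line: "((\<lambda>t. p + t *\<^sub>R v) has_derivative (\<lambda>s. s *\<^sub>R v)) (at t)" for t
    by (auto intro!: derivative_eq_intros)
  have h': "((\<lambda>t. F (p + t *\<^sub>R v)) has_real_derivative F' (p + t *\<^sub>R v) v) (at t)" for t
    by (rule has_derivative_imp_has_field_derivative[OF has_derivative_compose[OF line F']])
      (simp add: linear_scale[OF has_derivative_linear[OF F']])
  have "(\<lambda>y. F' y v) differentiable (at (p + 0 *\<^sub>R v))"
    using F'v by (auto simp: differentiable_def)
  then have k: "(\<lambda>t. F' (p + t *\<^sub>R v) v) differentiable (at 0)"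
    using differentiable_chain_at[of "\<lambda>t. p + t *\<^sub>R v" 0] line by (auto simp: differentiable_def o_def)
  show ?thesis
    using first_order_taylor_bigo[OF h' k] frechet_derivative_at[OF F'[of p]] by simp
qed

lemma has_derivative_partial_fst:
  fixes F :: "real \<times> 'a::real_normed_vector \<Rightarrow> real"
  assumes "(F has_derivative F') (at (t, y))"
  shows "((\<lambda>t. F (t, y)) has_real_derivative F' (1, 0)) (at t)"
proof -
  have "((\<lambda>t. (t, y)) has_derivative (\<lambda>s. (s, 0))) (at t)"
    by (auto intro!: derivative_eq_intros)
  from has_derivative_compose[OF this assms] show ?thesis
    by (rule has_derivative_imp_has_field_derivative)
      (metis linear_scale[OF has_derivative_linear[OF assms]] real_scaleR_def scaleR_Pair
        scaleR_zero_right mult.right_neutral)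
qed

lemma has_derivative_partial_snd:
  fixes F :: "real \<times> 'a::real_normed_vector \<Rightarrow> real"
  assumes "(F has_derivative F') (at (t, y))"
  shows "((\<lambda>y. F (t, y)) has_derivative (\<lambda>v. F' (0, v))) (at y)"
proof -
  have "((\<lambda>y. (t, y)) has_derivative (\<lambda>v. (0, v))) (at y)"
    by (auto intro!: derivative_eq_intros)
  from has_derivative_compose[OF this assms] show ?thesis .
qed

lemma Ck2_time_taylor_bigo:
  fixes phi :: "real \<Rightarrow> 'a::real_normed_vector \<Rightarrow> real"
  assumes "Ck 2 (\<lambda>p. phi (fst p) (snd p))"
  shows "(\<lambda>dx. phi (a * dx) x - (phi 0 x + a * dx * deriv (\<lambda>t. phi t x) 0)) \<in> O[at_right 0](\<lambda>dx. dx^2)"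
proof -
  define F where "F p = phi (fst p) (snd p)" for p :: "real \<times> 'a"
  have F: "Ck 2 F"
    using assms by (simp add: F_def [abs_def])
  define DF where "DF = frechet_derivative F (at (0, x))"
  have DF: "(F has_derivative DF) (at (0, x))"
    using F unfolding DF_def numeral_2_eq_2 by (rule Ck_Suc_has_derivative)
  have "deriv (\<lambda>t. phi t x) 0 = DF (1, 0)"
    using has_derivative_partial_fst[OF DF] by (intro DERIV_imp_deriv) (simp add: F_def)
  moreover have "DF (a, 0) = a * DF (1, 0)"
    using linear_scale[OF has_derivative_linear[OF DF], of a "(1, 0)"] by simp
  ultimately show ?thesis
    using Ck2_taylor_bigo[OF F, of "(0, x)" "(a, 0)"] by (simp add: F_def DF_def [symmetric] mult_ac)
qed

lemma Ck2_slice_taylor_bigo: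
  fixes phi :: "real \<Rightarrow> 'a::real_normed_vector \<Rightarrow> real"
  assumes "Ck 2 (\<lambda>p. phi (fst p) (snd p))"
  shows "phi t differentiable (at x)"
    and "(\<lambda>h. phi t (x + h *\<^sub>R v) - (phi t x + h * frechet_derivative (phi t) (at x) v))
           \<in> O[at_right 0](\<lambda>h. h^2)"
proof -
  define F where "F p = phi (fst p) (snd p)" for p :: "real \<times> 'a"
  have F: "Ck 2 F"
    using assms by (simp add: F_def [abs_def])
  define DF where "DF = frechet_derivative F (at (t, x))"
  have DF: "(F has_derivative DF) (at (t, x))"
    using F unfolding DF_def numeral_2_eq_2 by (rule Ck_Suc_has_derivative)
  have slice: "(phi t has_derivative (\<lambda>v. DF (0, v))) (at x)"
    using has_derivative_partial_snd[OF DF] by (simp add: F_def)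
  then show "phi t differentiable (at x)"
    by (auto simp: differentiable_def)
  from slice have "frechet_derivative (phi t) (at x) = (\<lambda>v. DF (0, v))"
    by (rule frechet_derivative_at [symmetric])
  then show "(\<lambda>h. phi t (x + h *\<^sub>R v) - (phi t x + h * frechet_derivative (phi t) (at x) v))
           \<in> O[at_right 0](\<lambda>h. h^2)"
    using Ck2_taylor_bigo[OF F, of "(t, x)" "(0, v)"] by (simp add: F_def DF_def [symmetric])
qed

definition collide :: "nat \<Rightarrow> (nat \<Rightarrow> real) \<Rightarrow> (nat \<Rightarrow> real) \<Rightarrow> (nat \<Rightarrow> real) \<Rightarrow> nat \<Rightarrow> real" where
  "collide q s eps v = (\<lambda>j. \<Sum>l=1..q. Kmat s eps j l * v l)"

lemma collide_conserved:
  assumes "1 \<le> q" and "eps 1 = 1"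
  shows "collide q s eps v 1 = v 1"
proof -
  have "collide q s eps v 1 = (\<Sum>l=1..q. if l = 1 then v l else 0)"
    unfolding collide_def using assms(2) by (intro sum.cong) (auto simp: Kmat_def)
  also have "\<dots> = v 1"
    using assms(1) by simp
  finally show ?thesis .
qed

lemma collide_nonconserved:
  assumes "r \<in> {2..q}"
  shows "collide q s eps v r = v r - s r * (v r - eps r * v 1)"
proof -
  have "collide q s eps v r = (\<Sum>l=1..q. (if l = r then (1 - s r) * v l else 0) + (if l = 1 then s r * eps r * v l else 0))"
    unfolding collide_def using assms by (intro sum.cong) (auto simp: Kmat_def algebra_simps)
  also have "\<dots> = (1 - s r) * v r + s r * eps r * v 1"
    using assms by (simp add: sum.distrib)
  finally show ?thesis
    by (simp add: algebra_simps)
qed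

lemma collide_pow_conserved:
  assumes "1 \<le> q" and "eps 1 = 1"
  shows "(collide q s eps ^^ n) w 1 = w 1"
  by (induction n) (simp_all add: collide_conserved assms del: One_nat_def)

lemma collide_pow_nonconserved:
  assumes "1 \<le> q" and "eps 1 = 1" and r: "r \<in> {2..q}"
  shows "(collide q s eps ^^ n) w r = w r + (eps r * w 1 - w r) * pi_poly n (s r)"
proof (induction n)
  case 0
  show ?case by (simp add: pi_poly_def)
next
  case (Suc n)
  have "(collide q s eps ^^ Suc n) w r
      = (collide q s eps ^^ n) w r - s r * ((collide q s eps ^^ n) w r - eps r * w 1)"
    by (simp add: collide_nonconserved[OF r] collide_pow_conserved assms(1,2)
        del: One_nat_def)
  then show ?case
    unfolding Suc.IH by (simp add: pi_poly_def algebra_simps)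
qed

primrec first_order_coeff ::
  "nat \<Rightarrow> (nat \<Rightarrow> real) \<Rightarrow> (nat \<Rightarrow> real) \<Rightarrow> (nat \<Rightarrow> nat \<Rightarrow> real) \<Rightarrow> (nat \<Rightarrow> real) \<Rightarrow> nat \<Rightarrow> nat \<Rightarrow> real" where
  "first_order_coeff q s eps G w 0 = (\<lambda>_. 0)"
| "first_order_coeff q s eps G w (Suc n) = (\<lambda>i. collide q s eps (first_order_coeff q s eps G w n) i
      + (\<Sum>j=1..q. G i j * (collide q s eps ^^ Suc n) w j))"

text \<open>The moments are compared with \<open>a \<phi> - dx g\<close> only along the rays \<open>x - dx v\<close>: streaming
  moves evaluation points by \<open>dx c\<^sub>k\<close>, so rays through \<open>x\<close> are mapped to rays through \<open>x\<close>.\<close>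

definition moments_expand ::
  "nat \<Rightarrow> (real^'d \<Rightarrow> real) \<Rightarrow> real^'d \<Rightarrow> (real \<Rightarrow> nat \<Rightarrow> real^'d \<Rightarrow> real) \<Rightarrow> (nat \<Rightarrow> real) \<Rightarrow> (nat \<Rightarrow> real) \<Rightarrow> bool"
where
  "moments_expand q Phi x m a g \<longleftrightarrow>
     (\<forall>l\<in>{1..q}. \<forall>v. (\<lambda>dx. m dx l (x - dx *\<^sub>R v)
         - (a l * (Phi x - dx * frechet_derivative Phi (at x) v) - dx * g l)) \<in> O[at_right 0](\<lambda>dx. dx^2))"

lemma lbm_step_add:
  "lbm_step q c M Minv s eps dx (\<lambda>l y. m1 l y + m2 l y) i y
     = lbm_step q c M Minv s eps dx m1 i y + lbm_step q c M Minv s eps dx m2 i y"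
  by (simp add: lbm_step_def distrib_left sum.distrib)

lemma lbm_step_bigo:
  assumes "\<forall>l\<in>{1..q}. \<forall>v. (\<lambda>dx. R dx l (x - dx *\<^sub>R v)) \<in> O[at_right 0](\<lambda>dx. dx^2)"
  shows "(\<lambda>dx. lbm_step q c M Minv s eps dx (R dx) i (x - dx *\<^sub>R v)) \<in> O[at_right 0](\<lambda>dx. dx^2)"
proof -
  have ray: "x - dx *\<^sub>R v - dx *\<^sub>R realv (c k) = x - dx *\<^sub>R (v + realv (c k))" for dx k
    by (simp add: scaleR_add_right)
  show ?thesis
    unfolding lbm_step_def ray
    by (intro big_sum_in_bigo cmult_in_bigo_iff[THEN iffD2, OF disjI2]) (use assms in blast)
qed

lemma lbm_step_affine:
  fixes D :: "real^'d \<Rightarrow> real"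
  assumes inv: "\<forall>i\<in>{1..q}. \<forall>j\<in>{1..q}. (\<Sum>k=1..q. M i k * Minv k j) = (if i = j then 1 else 0)"
    and D: "linear D" and i: "i \<in> {1..q}"
  shows "lbm_step q c M Minv s eps dx (\<lambda>l y. a l * (P + D y) - dx * g l) i y
    = collide q s eps a i * (P + D y)
      - dx * (collide q s eps g i
              + (\<Sum>j=1..q. (\<Sum>k=1..q. M i k * Minv k j * D (realv (c k))) * collide q s eps a j))"
proof -
  let ?A = "collide q s eps a" and ?B = "collide q s eps g"
  define \<alpha> where "\<alpha> j = ?A j * (P + D y) - dx * ?B j" for j
  have collided: "(\<Sum>l=1..q. Kmat s eps j l * (a l * (P + D (y - dx *\<^sub>R realv (c k))) - dx * g l))
      = \<alpha> j - dx * (?A j * D (realv (c k)))" for j k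
    by (simp add: \<alpha>_def collide_def linear_diff[OF D] linear_scale[OF D] sum_subtractf
        sum_distrib_left sum_distrib_right sum.distrib algebra_simps)
  have "lbm_step q c M Minv s eps dx (\<lambda>l y. a l * (P + D y) - dx * g l) i y
      = (\<Sum>k=1..q. M i k * (\<Sum>j=1..q. Minv k j * (\<alpha> j - dx * (?A j * D (realv (c k))))))"
    unfolding lbm_step_def collided ..
  also have "\<dots> = (\<Sum>j=1..q. \<Sum>k=1..q. M i k * Minv k j * (\<alpha> j - dx * (?A j * D (realv (c k)))))"
    by (subst sum.swap) (simp add: sum_distrib_left mult.assoc)
  also have "\<dots> = (\<Sum>j=1..q. (\<Sum>k=1..q. M i k * Minv k j) * \<alpha> j)
      - dx * (\<Sum>j=1..q. (\<Sum>k=1..q. M i k * Minv k j * D (realv (c k))) * ?A j)"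
    by (simp add: sum_subtractf sum_distrib_left sum_distrib_right algebra_simps)
  also have "(\<Sum>j=1..q. (\<Sum>k=1..q. M i k * Minv k j) * \<alpha> j) = \<alpha> i"
    using inv i by (simp add: if_distrib[of "\<lambda>u. u * _"] cong: if_cong)
  finally show ?thesis
    by (simp add: \<alpha>_def algebra_simps)
qed

lemma moments_expand_lbm_step:
  assumes inv: "\<forall>i\<in>{1..q}. \<forall>j\<in>{1..q}. (\<Sum>k=1..q. M i k * Minv k j) = (if i = j then 1 else 0)"
    and Phi: "Phi differentiable (at x)" and m: "moments_expand q Phi x m a g"
  shows "moments_expand q Phi x (\<lambda>dx. lbm_step q c M Minv s eps dx (m dx)) (collide q s eps a)
           (\<lambda>i. collide q s eps g i + (\<Sum>j=1..q. Gop q c M Minv i j Phi x * collide q s eps a j))"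
proof -
  define D where "D = frechet_derivative Phi (at x)"
  have D: "linear D"
    using Phi by (simp add: D_def linear_frechet_derivative)
  define A where "A dx l y = a l * ((Phi x - D x) + D y) - dx * g l" for dx l y
  define R where "R dx l y = m dx l y - A dx l y" for dx l y
  have A_ray: "A dx l (x - dx *\<^sub>R v) = a l * (Phi x - dx * D v) - dx * g l" for dx l v
    by (simp add: A_def linear_diff[OF D] linear_scale[OF D])
  have "\<forall>l\<in>{1..q}. \<forall>v. (\<lambda>dx. R dx l (x - dx *\<^sub>R v)) \<in> O[at_right 0](\<lambda>dx. dx^2)"
    using m by (simp add: moments_expand_def R_def A_ray D_def)
  then have remainder: "(\<lambda>dx. lbm_step q c M Minv s eps dx (R dx) i (x - dx *\<^sub>R v)) \<in> O[at_right 0](\<lambda>dx. dx^2)"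
    for i v by (rule lbm_step_bigo)
  have split: "lbm_step q c M Minv s eps dx (m dx) i y
      = lbm_step q c M Minv s eps dx (A dx) i y + lbm_step q c M Minv s eps dx (R dx) i y" for dx i y
    using lbm_step_add[of q c M Minv s eps dx "A dx" "R dx" i y] by (simp add: R_def)
  have leading: "lbm_step q c M Minv s eps dx (A dx) i (x - dx *\<^sub>R v)
      = collide q s eps a i * (Phi x - dx * D v)
        - dx * (collide q s eps g i + (\<Sum>j=1..q. Gop q c M Minv i j Phi x * collide q s eps a j))"
    if "i \<in> {1..q}" for dx i v
    using lbm_step_affine[OF inv D that, where a=a and P="Phi x - D x" and dx=dx and g=g
        and y="x - dx *\<^sub>R v" and c=c and s=s and eps=eps]
    by (simp add: A_def [abs_def] Gop_def D_def [symmetric] linear_diff[OF D] linear_scale[OF D])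
  show ?thesis
    unfolding moments_expand_def D_def[symmetric] split using leading remainder by simp
qed

lemma moments_expand_iterate:
  assumes inv: "\<forall>i\<in>{1..q}. \<forall>j\<in>{1..q}. (\<Sum>k=1..q. M i k * Minv k j) = (if i = j then 1 else 0)"
    and Phi: "Phi differentiable (at x)" and m0: "moments_expand q Phi x (\<lambda>_. m0) w (\<lambda>_. 0)"
  shows "moments_expand q Phi x (\<lambda>dx. (lbm_step q c M Minv s eps dx ^^ n) m0) ((collide q s eps ^^ n) w)
           (first_order_coeff q s eps (\<lambda>i j. Gop q c M Minv i j Phi x) w n)"
proof (induction n)
  case 0
  show ?case using m0 by simp
next
  case (Suc n)
  show ?case using moments_expand_lbm_step[OF inv Phi Suc.IH] by simp
qed

lemma moments_expand_initial:
  assumes Phi: "Phi differentiable (at x)"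
    and taylor: "\<And>v. (\<lambda>t. Phi (x + t *\<^sub>R v) - (Phi x + t * frechet_derivative Phi (at x) v))
                   \<in> O[at_right 0](\<lambda>t. t^2)"
  shows "moments_expand q Phi x (\<lambda>_ l y. w l * Phi y) w (\<lambda>_. 0)"
proof -
  have D: "linear (frechet_derivative Phi (at x))"
    using Phi by (rule linear_frechet_derivative)
  have "(\<lambda>dx. Phi (x - dx *\<^sub>R v) - (Phi x - dx * frechet_derivative Phi (at x) v)) \<in> O[at_right 0](\<lambda>t. t^2)"
    for v using taylor[of "- v"] by (simp add: linear_neg[OF D])
  then show ?thesis
    by (simp add: moments_expand_def right_diff_distrib[symmetric])
qed

lemma first_order_coeff_conserved:
  assumes "1 \<le> q" and "eps 1 = 1"
  shows "first_order_coeff q s eps G w n 1 = (\<Sum>b=1..n. \<Sum>j=1..q. G 1 j * (collide q s eps ^^ b) w j)"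
  by (induction n) (simp_all add: collide_conserved assms del: One_nat_def)

lemma first_order_coeff_conserved_closed_form:
  assumes q: "1 \<le> q" and eps: "eps 1 = 1"
  shows "first_order_coeff q s eps G w n 1
    = real n * (G 1 1 * w 1 + (\<Sum>r=2..q. G 1 r * w r))
      + (\<Sum>r=2..q. G 1 r * (eps r * w 1 - w r) * (\<Sum>l=0..n-1. pi_poly (n - l) (s r)))"
proof -
  have step: "(\<Sum>j=1..q. G 1 j * (collide q s eps ^^ b) w j)
      = G 1 1 * w 1 + (\<Sum>r=2..q. G 1 r * w r) + (\<Sum>r=2..q. G 1 r * (eps r * w 1 - w r) * pi_poly b (s r))" for b
  proof -
    have "(\<Sum>j=1..q. G 1 j * (collide q s eps ^^ b) w j)
        = G 1 1 * (collide q s eps ^^ b) w 1 + (\<Sum>r=2..q. G 1 r * (collide q s eps ^^ b) w r)"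
      using q by (simp add: sum.atLeast_Suc_atMost numeral_2_eq_2)
    also have "(collide q s eps ^^ b) w 1 = w 1"
      using q eps by (rule collide_pow_conserved)
    also have "(\<Sum>r=2..q. G 1 r * (collide q s eps ^^ b) w r)
        = (\<Sum>r=2..q. G 1 r * w r) + (\<Sum>r=2..q. G 1 r * (eps r * w 1 - w r) * pi_poly b (s r))"
      unfolding sum.distrib[symmetric]
      by (intro sum.cong) (simp_all add: collide_pow_nonconserved[where q=q and eps=eps, OF q eps] algebra_simps)
    finally show ?thesis
      by (simp only: add.assoc)
  qed
  have reverse: "(\<Sum>l=0..n-1. pi_poly (n - l) X) = (\<Sum>b=1..n. pi_poly b X)" for X
  proof (cases n)
    case 0
    then show ?thesis by (simp add: pi_poly_def)
  next
    case (Suc m)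
    then have "(\<Sum>l=0..n-1. pi_poly (n - l) X) = (\<Sum>l=0..<n. pi_poly (n - l) X)"
      by (simp add: atLeastLessThanSuc_atLeastAtMost)
    also have "\<dots> = (\<Sum>b=1..n. pi_poly (n - (n + 0 - b)) X)"
      unfolding One_nat_def by (rule sum.atLeastLessThan_rev_at_least_Suc_atMost)
    also have "\<dots> = (\<Sum>b=1..n. pi_poly b X)"
      by (intro sum.cong) auto
    finally show ?thesis .
  qed
  have "(\<Sum>b=1..n. \<Sum>r=2..q. G 1 r * (eps r * w 1 - w r) * pi_poly b (s r))
      = (\<Sum>r=2..q. G 1 r * (eps r * w 1 - w r) * (\<Sum>b=1..n. pi_poly b (s r)))"
    by (subst sum.swap) (simp add: sum_distrib_left)
  then show ?thesis
    unfolding first_order_coeff_conserved[where q=q and eps=eps, OF q eps] step reverse sum.distrib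
    by (simp add: algebra_simps)
qed

lemma starting_scheme_first_order:
  assumes q: "1 \<le> q"
    and inv: "\<forall>i\<in>{1..q}. \<forall>j\<in>{1..q}. (\<Sum>k=1..q. M i k * Minv k j) = (if i = j then 1 else 0)"
    and eps: "eps 1 = 1" and Phi: "Phi differentiable (at x)"
    and taylor: "\<And>v. (\<lambda>t. Phi (x + t *\<^sub>R v) - (Phi x + t * frechet_derivative Phi (at x) v))
                   \<in> O[at_right 0](\<lambda>t. t^2)"
  shows "(\<lambda>dx. starting_scheme q c M Minv s eps w n dx Phi x
           - (w 1 * Phi x - dx * first_order_coeff q s eps (\<lambda>i j. Gop q c M Minv i j Phi x) w n 1))
         \<in> O[at_right 0](\<lambda>dx. dx^2)"
proof -
  have "moments_expand q Phi x (\<lambda>dx. (lbm_step q c M Minv s eps dx ^^ n) (\<lambda>l y. w l * Phi y))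
      ((collide q s eps ^^ n) w) (first_order_coeff q s eps (\<lambda>i j. Gop q c M Minv i j Phi x) w n)"
    by (intro moments_expand_iterate inv Phi moments_expand_initial taylor)
  then have "(\<lambda>dx. (lbm_step q c M Minv s eps dx ^^ n) (\<lambda>l y. w l * Phi y) 1 (x - dx *\<^sub>R 0)
      - ((collide q s eps ^^ n) w 1 * (Phi x - dx * frechet_derivative Phi (at x) 0)
         - dx * first_order_coeff q s eps (\<lambda>i j. Gop q c M Minv i j Phi x) w n 1))
      \<in> O[at_right 0](\<lambda>dx. dx^2)"
    using q unfolding moments_expand_def by (meson atLeastAtMost_iff order_refl)
  then show ?thesis
    by (simp add: starting_scheme_def collide_pow_conserved[where q=q and eps=eps, OF q eps]
        linear_0[OF linear_frechet_derivative[OF Phi]] del: One_nat_def)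
qed

theorem proposition1:
  fixes q :: nat and c :: "nat \<Rightarrow> int^'d" and M Minv :: "nat \<Rightarrow> nat \<Rightarrow> real"
    and s eps w :: "nat \<Rightarrow> real" and lam :: real and n :: nat
    and phi :: "real \<Rightarrow> real^'d \<Rightarrow> real" and x :: "real^'d"
  assumes q: "q \<ge> 1"
    and inv1: "\<forall>i\<in>{1..q}. \<forall>j\<in>{1..q}. (\<Sum>k=1..q. M i k * Minv k j) = (if i = j then 1 else 0)"
    and inv2: "\<forall>i\<in>{1..q}. \<forall>j\<in>{1..q}. (\<Sum>k=1..q. Minv i k * M k j) = (if i = j then 1 else 0)"
    and s: "\<forall>i\<in>{2..q}. 0 < s i \<and> s i \<le> 2"
    and eps1: "eps 1 = 1"
    and lam: "lam > 0"
    and n: "n \<ge> 1"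
    and smooth: "smooth_fun (\<lambda>p::real \<times> (real^'d). phi (fst p) (snd p))"
  shows "(\<lambda>dx. phi (real n * dx / lam) x
              - (phi 0 x + real n * dx / lam * deriv (\<lambda>t. phi t x) 0))
           \<in> O[at_right 0](\<lambda>dx. dx ^ 2)
       \<and> (\<lambda>dx. starting_scheme q c M Minv s eps w n dx (phi 0) x
              - (w 1 * phi 0 x
                 - real n * dx *
                   (Gop q c M Minv 1 1 (phi 0) x * w 1
                    + (\<Sum>r=2..q. Gop q c M Minv 1 r (phi 0) x * w r)
                    + 1 / real n * (\<Sum>r=2..q. Gop q c M Minv 1 r (phi 0) x * (eps r * w 1 - w r)
                                        * (\<Sum>l=0..n-1. pi_poly (n - l) (s r))))))
           \<in> O[at_right 0](\<lambda>dx. dx ^ 2)"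
proof -
  have F: "Ck 2 (\<lambda>p. phi (fst p) (snd p))"
    using smooth by (simp add: smooth_fun_def)
  have time: "(\<lambda>dx. phi (real n * dx / lam) x - (phi 0 x + real n * dx / lam * deriv (\<lambda>t. phi t x) 0))
      \<in> O[at_right 0](\<lambda>dx. dx ^ 2)"
    using Ck2_time_taylor_bigo[OF F, of "real n / lam" x] by simp
  have space: "(\<lambda>dx. starting_scheme q c M Minv s eps w n dx (phi 0) x
      - (w 1 * phi 0 x - dx * first_order_coeff q s eps (\<lambda>i j. Gop q c M Minv i j (phi 0) x) w n 1))
      \<in> O[at_right 0](\<lambda>dx. dx ^ 2)"
    using Ck2_slice_taylor_bigo[OF F] by (intro starting_scheme_first_order q inv1 eps1)
  have coeff: "real n * dx *
      (Gop q c M Minv 1 1 (phi 0) x * w 1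
       + (\<Sum>r=2..q. Gop q c M Minv 1 r (phi 0) x * w r)
       + 1 / real n * (\<Sum>r=2..q. Gop q c M Minv 1 r (phi 0) x * (eps r * w 1 - w r)
                          * (\<Sum>l=0..n-1. pi_poly (n - l) (s r))))
      = dx * first_order_coeff q s eps (\<lambda>i j. Gop q c M Minv i j (phi 0) x) w n 1" for dx
    using n by (simp add: first_order_coeff_conserved_closed_form[where q=q and eps=eps, OF q eps1]
        algebra_simps del: One_nat_def)
  show ?thesis
    using time space unfolding coeff by blast
qed

end
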